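(* Let $d=1$, $\gamma>2$, and let $T_{\infty,\gamma}$ be distributed as $\int_{\mathbb{R}}W(t)^2 w_\gamma(t)\,\mathrm{d}t$, where $W$ is a centred Gaussian random element of $\mathrm{L}^2(\mathbb{R},\mathcal{B},w_\gamma(t)\mathrm{d}t)$ with covariance kernel $K(s,t)=\mathrm{e}^{(s^2+t^2)/2}\big(\mathrm{e}^{st}(ts+1)-ts-(1+st)\big)$. Then, with $\beta=\gamma-1$, $\delta=(\beta^2-1)^{-1/2}$ and $\eta=(4\beta^2-1)^{-1/2}$, \[ \mathrm{Var}[T_{\infty,\gamma}]=2\pi\Big(\beta^{-1}+\beta^{-3}+\delta+\delta^3+\tfrac14(\beta^2+2)\delta^5-4\eta-12\eta^3-16(2\beta^2+1)\eta^5\Big). \]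
   Context: $w_\gamma(t)=\exp(-\gamma t^2)$, $t\in\mathbb{R}$; $K(s,t)=\mathbb{E}[W(s)W(t)]$. *)

theory Defs
  imports "HOL-Probability.Probability"
begin

definition w_gamma :: "real \<Rightarrow> real \<Rightarrow> real" where
  "w_gamma \<gamma> t = exp (- \<gamma> * t\<^sup>2)"

definition K_lim :: "real \<Rightarrow> real \<Rightarrow> real" where
  "K_lim s t = exp ((s\<^sup>2 + t\<^sup>2) / 2) * (exp (s * t) * (t * s + 1) - t * s - (1 + s * t))"

definition centred_gaussian_rv :: "'a measure \<Rightarrow> ('a \<Rightarrow> real) \<Rightarrow> real \<Rightarrow> bool" where
  "centred_gaussian_rv M X v \<longleftrightarrow>
     X \<in> borel_measurable M \<and>
     (if v = 0 then (AE \<omega> in M. X \<omega> = 0)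
      else 0 < v \<and> distributed M lborel X (normal_density 0 (sqrt v)))"

definition centred_gaussian_process ::
  "'a measure \<Rightarrow> (real \<Rightarrow> real \<Rightarrow> real) \<Rightarrow> ('a \<Rightarrow> real \<Rightarrow> real) \<Rightarrow> bool" where
  "centred_gaussian_process M K W \<longleftrightarrow>
     (\<forall>(n::nat) (ts::nat \<Rightarrow> real) (c::nat \<Rightarrow> real).
        centred_gaussian_rv M (\<lambda>\<omega>. \<Sum>i<n. c i * W \<omega> (ts i))
          (\<Sum>i<n. \<Sum>j<n. c i * c j * K (ts i) (ts j)))"

end

theory Submission
  imports Defs
begin

text \<open>Write \<open>T = \<integral> W(t)\<^sup>2 w(t) dt\<close>. By Tonelli, \<open>E T = \<integral> K(t,t) w(t) dt\<close> and
  \<open>E T\<^sup>2 = \<integral>\<integral> E[W(s)\<^sup>2 W(t)\<^sup>2] w(s) w(t) ds dt\<close>; Isserlis' formula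
  \<open>E[W(s)\<^sup>2 W(t)\<^sup>2] = K(s,s) K(t,t) + 2 K(s,t)\<^sup>2\<close> then leaves
  \<open>Var T = 2 \<integral>\<integral> K(s,t)\<^sup>2 w(s) w(t) ds dt\<close>. With \<open>\<beta> = \<gamma> - 1\<close>, the integrand is a sum of
  terms \<open>exp(-\<beta>(s\<^sup>2 + t\<^sup>2) + c s t)\<close> times polynomials, so the double integral is two successive
  Gaussian integrals. The inner one produces Gaussians in \<open>s\<close> of rates \<open>\<beta> - 1/\<beta>\<close> and
  \<open>\<beta> - 1/(4\<beta>)\<close>, which is where \<open>\<delta>\<close> and \<open>\<eta>\<close> come from.\<close>

lemma exp_quadratic_eq_normal_density:
  assumes "a > 0"
  shows "exp (- a * t\<^sup>2 + b * t)
    = sqrt (pi / a) * exp (b\<^sup>2 / (4 * a)) * normal_density (b / (2 * a)) (1 / sqrt (2 * a)) t"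
proof -
  have "(1 / sqrt (2 * a))\<^sup>2 = 1 / (2 * a)"
    using assms by (simp add: power_divide)
  then have "normal_density (b / (2 * a)) (1 / sqrt (2 * a)) t
      = 1 / sqrt (pi / a) * exp (- a * (t - b / (2 * a))\<^sup>2)"
    unfolding normal_density_def using assms by (simp add: field_simps)
  moreover have "b\<^sup>2 / (4 * a) + - a * (t - b / (2 * a))\<^sup>2 = - a * t\<^sup>2 + b * t"
    using assms by (simp add: field_simps power2_eq_square)
  ultimately show ?thesis
    using assms by (simp add: exp_add[symmetric])
qed

lemma has_bochner_integral_exp_quadratic_times:
  assumes "a > 0"
    and "has_bochner_integral lborel
           (\<lambda>x. normal_density (b / (2 * a)) (1 / sqrt (2 * a)) x * f x) I"
  shows "has_bochner_integral lborel (\<lambda>t. exp (- a * t\<^sup>2 + b * t) * f t)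
           (sqrt (pi / a) * exp (b\<^sup>2 / (4 * a)) * I)"
  unfolding exp_quadratic_eq_normal_density[OF assms(1)] mult.assoc
  by (intro has_bochner_integral_mult_right assms(2))

lemma has_bochner_integral_normal_density_quadratic:
  assumes "\<sigma> > 0"
  shows "has_bochner_integral lborel (\<lambda>x. normal_density \<mu> \<sigma> x * (p0 + p1 * x + p2 * x\<^sup>2))
           (p0 + p1 * \<mu> + p2 * (\<mu>\<^sup>2 + \<sigma>\<^sup>2))"
proof -
  have m0: "has_bochner_integral lborel (normal_density \<mu> \<sigma>) 1"
    using normal_moment_even[OF assms, where k=0 and \<mu>=\<mu>] by simp
  have m1: "has_bochner_integral lborel (\<lambda>x. normal_density \<mu> \<sigma> x * (x - \<mu>)) 0"
    using normal_moment_odd[OF assms, where k=0 and \<mu>=\<mu>] by simp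
  have m2: "has_bochner_integral lborel (\<lambda>x. normal_density \<mu> \<sigma> x * (x - \<mu>)\<^sup>2) (\<sigma>\<^sup>2)"
    using normal_moment_even[OF assms, where k=1 and \<mu>=\<mu>] by simp
  have "has_bochner_integral lborel
      (\<lambda>x. (p0 + p1 * \<mu> + p2 * \<mu>\<^sup>2) * normal_density \<mu> \<sigma> x
         + (p1 + 2 * p2 * \<mu>) * (normal_density \<mu> \<sigma> x * (x - \<mu>))
         + p2 * (normal_density \<mu> \<sigma> x * (x - \<mu>)\<^sup>2))
      ((p0 + p1 * \<mu> + p2 * \<mu>\<^sup>2) * 1 + (p1 + 2 * p2 * \<mu>) * 0 + p2 * \<sigma>\<^sup>2)"
    by (intro has_bochner_integral_add has_bochner_integral_mult_right m0 m1 m2)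
  then show ?thesis
    by (simp add: algebra_simps power2_eq_square)
qed

lemma has_bochner_integral_normal_density_even_quartic:
  assumes "\<sigma> > 0"
  shows "has_bochner_integral lborel (\<lambda>x. normal_density 0 \<sigma> x * (p0 + p2 * x\<^sup>2 + p4 * x ^ 4))
           (p0 + p2 * \<sigma>\<^sup>2 + 3 * p4 * \<sigma> ^ 4)"
proof -
  have m0: "has_bochner_integral lborel (normal_density 0 \<sigma>) 1"
    using normal_moment_even[OF assms, where k=0 and \<mu>=0] by simp
  have m2: "has_bochner_integral lborel (\<lambda>x. normal_density 0 \<sigma> x * x\<^sup>2) (\<sigma>\<^sup>2)"
    using normal_moment_even[OF assms, where k=1 and \<mu>=0] by simp
  have m4: "has_bochner_integral lborel (\<lambda>x. normal_density 0 \<sigma> x * x ^ 4) (3 * \<sigma> ^ 4)"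
    using normal_moment_even[OF assms, where k=2 and \<mu>=0]
    by (simp add: fact_numeral power2_eq_square power4_eq_xxxx field_simps)
  have "has_bochner_integral lborel
      (\<lambda>x. p0 * normal_density 0 \<sigma> x + p2 * (normal_density 0 \<sigma> x * x\<^sup>2)
         + p4 * (normal_density 0 \<sigma> x * x ^ 4))
      (p0 * 1 + p2 * \<sigma>\<^sup>2 + p4 * (3 * \<sigma> ^ 4))"
    by (intro has_bochner_integral_add has_bochner_integral_mult_right m0 m2 m4)
  then show ?thesis
    by (simp add: algebra_simps)
qed

lemma has_bochner_integral_gaussian_quadratic:
  assumes "a > 0"
  shows "has_bochner_integral lborel (\<lambda>t. exp (- a * t\<^sup>2 + b * t) * (p0 + p1 * t + p2 * t\<^sup>2))
     (sqrt (pi / a) * exp (b\<^sup>2 / (4 * a))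
        * (p0 + p1 * (b / (2 * a)) + p2 * ((b / (2 * a))\<^sup>2 + 1 / (2 * a))))"
proof -
  have "(1 / sqrt (2 * a))\<^sup>2 = 1 / (2 * a)"
    using assms by (simp add: power_divide)
  then show ?thesis
    using has_bochner_integral_normal_density_quadratic[of "1 / sqrt (2 * a)" "b / (2 * a)"] assms
    by (intro has_bochner_integral_exp_quadratic_times) auto
qed

lemma has_bochner_integral_gaussian_even_quartic:
  assumes "a > 0"
  shows "has_bochner_integral lborel (\<lambda>t. exp (- a * t\<^sup>2) * (p0 + p2 * t\<^sup>2 + p4 * t ^ 4))
     (sqrt (pi / a) * (p0 + p2 / (2 * a) + 3 * p4 / (4 * a\<^sup>2)))"
proof -
  have \<sigma>: "(1 / sqrt (2 * a))\<^sup>2 = 1 / (2 * a)" "(1 / sqrt (2 * a)) ^ 4 = 1 / (4 * a\<^sup>2)"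
    using assms by (simp_all add: power_divide power4_eq_xxxx power2_eq_square)
  show ?thesis
    using has_bochner_integral_exp_quadratic_times[OF assms, of 0]
      has_bochner_integral_normal_density_even_quartic[of "1 / sqrt (2 * a)"] assms
    by (simp add: \<sigma>)
qed

lemma centred_gaussian_rv_even_moment:
  assumes "prob_space M" and X: "centred_gaussian_rv M X v"
  shows "has_bochner_integral M (\<lambda>\<omega>. X \<omega> ^ (2 * k)) (fact (2 * k) / (2 ^ k * fact k) * v ^ k)"
proof (cases "v = 0")
  case True
  interpret prob_space M by fact
  have "X \<in> borel_measurable M" and "AE \<omega> in M. X \<omega> = 0"
    using X True by (auto simp: centred_gaussian_rv_def)
  then have "has_bochner_integral M (\<lambda>\<omega>. X \<omega> ^ (2 * k)) x
      \<longleftrightarrow> has_bochner_integral M (\<lambda>_. 0 ^ (2 * k)) x" for x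
    by (intro has_bochner_integral_cong_AE) auto
  moreover have "has_bochner_integral M (\<lambda>_. 0 ^ (2 * k)) (0 ^ (2 * k) :: real)"
    by (simp add: has_bochner_integral_iff prob_space)
  ultimately show ?thesis
    using True by (cases k) simp_all
next
  case False
  then have "0 < v" and D: "distributed M lborel X (normal_density 0 (sqrt v))"
    using X by (auto simp: centred_gaussian_rv_def)
  then have "has_bochner_integral lborel (\<lambda>x. normal_density 0 (sqrt v) x * x ^ (2 * k))
      (fact (2 * k) / (2 ^ k * fact k) * v ^ k)"
    using normal_moment_even[where \<sigma>="sqrt v" and k=k and \<mu>=0] by (simp add: power_divide)
  then show ?thesis
    using distributed_integrable[OF D, of "\<lambda>x. x ^ (2 * k)"] distributed_integral[OF D, of "\<lambda>x. x ^ (2 * k)"]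
    by (simp add: has_bochner_integral_iff)
qed

lemma centred_gaussian_rv_second_moment:
  assumes "prob_space M" and "centred_gaussian_rv M X v"
  shows "has_bochner_integral M (\<lambda>\<omega>. (X \<omega>)\<^sup>2) v"
  using centred_gaussian_rv_even_moment[OF assms, of 1] by simp

lemma centred_gaussian_rv_fourth_moment:
  assumes "prob_space M" and "centred_gaussian_rv M X v"
  shows "has_bochner_integral M (\<lambda>\<omega>. X \<omega> ^ 4) (3 * v\<^sup>2)"
  using centred_gaussian_rv_even_moment[OF assms, of 2] by (simp add: fact_numeral)

text \<open>Isserlis' formula, derived from fourth moments alone by polarization.\<close>
lemma centred_gaussian_square_product_moment:
  assumes "prob_space M"
    and "centred_gaussian_rv M X a" and "centred_gaussian_rv M Y b"
    and "centred_gaussian_rv M (\<lambda>\<omega>. X \<omega> + Y \<omega>) (a + b + 2 * c)"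
    and "centred_gaussian_rv M (\<lambda>\<omega>. X \<omega> - Y \<omega>) (a + b - 2 * c)"
  shows "has_bochner_integral M (\<lambda>\<omega>. (X \<omega>)\<^sup>2 * (Y \<omega>)\<^sup>2) (a * b + 2 * c\<^sup>2)"
proof -
  have polarization: "(X \<omega>)\<^sup>2 * (Y \<omega>)\<^sup>2
      = ((X \<omega> + Y \<omega>) ^ 4 + (X \<omega> - Y \<omega>) ^ 4 - 2 * X \<omega> ^ 4 - 2 * Y \<omega> ^ 4) / 12" for \<omega>
    by (simp add: algebra_simps power2_eq_square power4_eq_xxxx)
  have "a * b + 2 * c\<^sup>2
      = (3 * (a + b + 2 * c)\<^sup>2 + 3 * (a + b - 2 * c)\<^sup>2 - 2 * (3 * a\<^sup>2) - 2 * (3 * b\<^sup>2)) / 12"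
    by (simp add: algebra_simps power2_eq_square)
  then show ?thesis
    unfolding polarization
    using assms(2-)[THEN centred_gaussian_rv_fourth_moment[OF assms(1)]]
    by (simp only:) (intro has_bochner_integral_divide_zero has_bochner_integral_diff
        has_bochner_integral_add has_bochner_integral_mult_right)
qed

lemma centred_gaussian_process_two_points:
  assumes "centred_gaussian_process M K W"
  shows "centred_gaussian_rv M (\<lambda>\<omega>. a * W \<omega> s + b * W \<omega> t)
           (a * a * K s s + a * b * K s t + b * a * K t s + b * b * K t t)"
proof -
  let ?c = "\<lambda>i::nat. if i = 0 then a else b" and ?ts = "\<lambda>i::nat. if i = 0 then s else t"
  have "centred_gaussian_rv M (\<lambda>\<omega>. \<Sum>i<n. c i * W \<omega> (ts i))
      (\<Sum>i<n. \<Sum>j<n. c i * c j * K (ts i) (ts j))" for n :: nat and ts c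
    using assms unfolding centred_gaussian_process_def by blast
  from this[where n=2 and c="?c" and ts="?ts"] show ?thesis
    by (simp add: eval_nat_numeral add.assoc)
qed

lemma centred_gaussian_process_point:
  assumes "centred_gaussian_process M K W"
  shows "centred_gaussian_rv M (\<lambda>\<omega>. W \<omega> s) (K s s)"
  using centred_gaussian_process_two_points[OF assms, of 1 s 0 s] by simp

lemma centred_gaussian_process_square_product_moment:
  assumes "prob_space M" and "centred_gaussian_process M K W" and "K t s = K s t"
  shows "has_bochner_integral M (\<lambda>\<omega>. (W \<omega> s)\<^sup>2 * (W \<omega> t)\<^sup>2) (K s s * K t t + 2 * (K s t)\<^sup>2)"
proof (rule centred_gaussian_square_product_moment[OF assms(1)])
  show "centred_gaussian_rv M (\<lambda>\<omega>. W \<omega> s + W \<omega> t) (K s s + K t t + 2 * K s t)"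
    using centred_gaussian_process_two_points[OF assms(2), of 1 s 1 t] assms(3) by (simp add: algebra_simps)
  show "centred_gaussian_rv M (\<lambda>\<omega>. W \<omega> s - W \<omega> t) (K s s + K t t - 2 * K s t)"
    using centred_gaussian_process_two_points[OF assms(2), of 1 s "-1" t] assms(3) by (simp add: algebra_simps)
qed (use centred_gaussian_process_point[OF assms(2)] in auto)

lemma has_bochner_integral_nonneg:
  fixes f :: "'a \<Rightarrow> real"
  assumes "has_bochner_integral N f v" and "\<And>x. x \<in> space N \<Longrightarrow> 0 \<le> f x"
  shows "0 \<le> v"
  using has_bochner_integral_integral_eq[OF assms(1)] Bochner_Integration.integral_nonneg[where M=N and f=f] assms(2)
  by simp

lemma nn_integral_eq_if_has_bochner_integral:
  fixes f :: "'a \<Rightarrow> real"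
  assumes "has_bochner_integral N f v" and "\<And>x. x \<in> space N \<Longrightarrow> 0 \<le> f x"
  shows "(\<integral>\<^sup>+x. f x \<partial>N) = ennreal v"
  using nn_integral_eq_integral[OF integrable.intros[OF assms(1)]]
    has_bochner_integral_integral_eq[OF assms(1)] assms(2) by (simp add: AE_I2)

lemma has_bochner_integral_integral_nonneg_field:
  fixes h :: "'a \<Rightarrow> 'b \<Rightarrow> real"
  assumes "sigma_finite_measure M" and "sigma_finite_measure N"
    and h_meas[measurable]: "(\<lambda>(\<omega>, t). h \<omega> t) \<in> borel_measurable (M \<Otimes>\<^sub>M N)"
    and h_nonneg: "\<And>\<omega> t. 0 \<le> h \<omega> t"
    and h_int: "\<And>\<omega>. \<omega> \<in> space M \<Longrightarrow> integrable N (h \<omega>)"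
    and mean: "\<And>t. t \<in> space N \<Longrightarrow> has_bochner_integral M (\<lambda>\<omega>. h \<omega> t) (\<mu> t)"
    and "has_bochner_integral N \<mu> m"
  shows "has_bochner_integral M (\<lambda>\<omega>. \<integral>t. h \<omega> t \<partial>N) m"
proof -
  interpret pair_sigma_finite M N
    using assms(1,2) by (simp add: pair_sigma_finite_def)
  have \<mu>_nonneg: "0 \<le> \<mu> t" if "t \<in> space N" for t
    using has_bochner_integral_nonneg[OF mean[OF that]] h_nonneg by blast
  have "(\<integral>\<^sup>+\<omega>. ennreal (\<integral>t. h \<omega> t \<partial>N) \<partial>M) = (\<integral>\<^sup>+\<omega>. (\<integral>\<^sup>+t. h \<omega> t \<partial>N) \<partial>M)"
    using h_int h_nonneg by (intro nn_integral_cong) (simp add: nn_integral_eq_integral)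
  also have "\<dots> = (\<integral>\<^sup>+t. (\<integral>\<^sup>+\<omega>. h \<omega> t \<partial>M) \<partial>N)"
    by (rule Fubini'[symmetric]) measurable
  also have "\<dots> = (\<integral>\<^sup>+t. \<mu> t \<partial>N)"
    using mean h_nonneg
    by (intro nn_integral_cong) (simp add: nn_integral_eq_if_has_bochner_integral)
  also have "\<dots> = ennreal m"
    using assms(7) \<mu>_nonneg by (rule nn_integral_eq_if_has_bochner_integral)
  finally have "(\<integral>\<^sup>+\<omega>. ennreal (\<integral>t. h \<omega> t \<partial>N) \<partial>M) = ennreal m" .
  moreover have "0 \<le> m"
    using assms(7) \<mu>_nonneg by (rule has_bochner_integral_nonneg)
  ultimately show ?thesis
    by (intro has_bochner_integral_nn_integral) (simp_all add: h_nonneg)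
qed

text \<open>Two applications of the first-moment lemma: to the field \<open>h(\<cdot>,s) h(\<cdot>,t)\<close> in \<open>t\<close>,
  which yields \<open>E[h(\<cdot>,s) T]\<close>, and then to the field \<open>h(\<cdot>,s) T\<close> in \<open>s\<close>.\<close>
lemma has_bochner_integral_square_integral_nonneg_field:
  fixes h :: "'a \<Rightarrow> 'b \<Rightarrow> real"
  assumes "sigma_finite_measure M" and "sigma_finite_measure N"
    and h_meas[measurable]: "(\<lambda>(\<omega>, t). h \<omega> t) \<in> borel_measurable (M \<Otimes>\<^sub>M N)"
    and h_nonneg: "\<And>\<omega> t. 0 \<le> h \<omega> t"
    and h_int: "\<And>\<omega>. \<omega> \<in> space M \<Longrightarrow> integrable N (h \<omega>)"
    and moment: "\<And>s t. s \<in> space N \<Longrightarrow> t \<in> space N \<Longrightarrow>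
                  has_bochner_integral M (\<lambda>\<omega>. h \<omega> s * h \<omega> t) (g s t)"
    and inner: "\<And>s. s \<in> space N \<Longrightarrow> has_bochner_integral N (g s) (G s)"
    and outer: "has_bochner_integral N G V"
  shows "has_bochner_integral M (\<lambda>\<omega>. (\<integral>t. h \<omega> t \<partial>N)\<^sup>2) V"
proof -
  interpret N: sigma_finite_measure N by fact
  define T where "T \<omega> = (\<integral>t. h \<omega> t \<partial>N)" for \<omega>
  have T_meas[measurable]: "T \<in> borel_measurable M"
    unfolding T_def by measurable
  have hT_mean: "has_bochner_integral M (\<lambda>\<omega>. h \<omega> s * T \<omega>) (G s)" if s: "s \<in> space N" for s
  proof -
    have [measurable]: "(\<lambda>\<omega>. h \<omega> s) \<in> borel_measurable M"
      using measurable_Pair1[OF h_meas s] by simp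
    have "has_bochner_integral M (\<lambda>\<omega>. \<integral>t. h \<omega> s * h \<omega> t \<partial>N) (G s)"
      by (rule has_bochner_integral_integral_nonneg_field[OF assms(1,2) _ _ _ moment[OF s] inner[OF s]])
         (measurable, simp_all add: h_nonneg h_int)
    then show ?thesis
      by (simp add: T_def)
  qed
  have "has_bochner_integral M (\<lambda>\<omega>. \<integral>s. h \<omega> s * T \<omega> \<partial>N) V"
    by (rule has_bochner_integral_integral_nonneg_field[OF assms(1,2) _ _ _ hT_mean outer])
       (measurable, simp_all add: T_def h_nonneg h_int integral_nonneg)
  then show ?thesis
    by (simp add: T_def power2_eq_square)
qed

lemma (in prob_space) variance_integral_nonneg_field:
  fixes h :: "'a \<Rightarrow> 'b \<Rightarrow> real"
  assumes "sigma_finite_measure N"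
    and h_meas: "(\<lambda>(\<omega>, t). h \<omega> t) \<in> borel_measurable (M \<Otimes>\<^sub>M N)"
    and h_nonneg: "\<And>\<omega> t. 0 \<le> h \<omega> t"
    and h_int: "\<And>\<omega>. \<omega> \<in> space M \<Longrightarrow> integrable N (h \<omega>)"
    and mean: "\<And>t. t \<in> space N \<Longrightarrow> has_bochner_integral M (\<lambda>\<omega>. h \<omega> t) (\<mu> t)"
    and \<mu>: "has_bochner_integral N \<mu> m"
    and cov: "\<And>s t. s \<in> space N \<Longrightarrow> t \<in> space N \<Longrightarrow>
               has_bochner_integral M (\<lambda>\<omega>. h \<omega> s * h \<omega> t) (\<mu> s * \<mu> t + c s t)"
    and c: "\<And>s. s \<in> space N \<Longrightarrow> has_bochner_integral N (c s) (C s)"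
    and C: "has_bochner_integral N C V"
  shows "variance (\<lambda>\<omega>. \<integral>t. h \<omega> t \<partial>N) = V"
proof -
  have M: "sigma_finite_measure M"
    by unfold_locales
  have "has_bochner_integral M (\<lambda>\<omega>. \<integral>t. h \<omega> t \<partial>N) m"
    using M assms(1) h_meas h_nonneg h_int mean \<mu>
    by (rule has_bochner_integral_integral_nonneg_field)
  moreover have "has_bochner_integral M (\<lambda>\<omega>. (\<integral>t. h \<omega> t \<partial>N)\<^sup>2) (m * m + V)"
    using M assms(1) h_meas h_nonneg h_int cov
  proof (rule has_bochner_integral_square_integral_nonneg_field)
    show "has_bochner_integral N (\<lambda>t. \<mu> s * \<mu> t + c s t) (\<mu> s * m + C s)" if "s \<in> space N" for s
      using \<mu> c[OF that] by (intro has_bochner_integral_add has_bochner_integral_mult_right)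
    show "has_bochner_integral N (\<lambda>s. \<mu> s * m + C s) (m * m + V)"
      using \<mu> C by (intro has_bochner_integral_add has_bochner_integral_mult_left)
  qed
  ultimately show ?thesis
    unfolding has_bochner_integral_iff using variance_eq[of "\<lambda>\<omega>. \<integral>t. h \<omega> t \<partial>N"]
    by (simp add: power2_eq_square)
qed

lemma K_lim_commute: "K_lim t s = K_lim s t"
  unfolding K_lim_def by (simp add: algebra_simps)

lemma K_lim_diag_w_gamma:
  "K_lim t t * w_gamma \<gamma> t
     = exp (- (\<gamma> - 2) * t\<^sup>2) * (1 + t\<^sup>2) - exp (- (\<gamma> - 1) * t\<^sup>2) * (1 + 2 * t\<^sup>2)"
proof -
  have "exp (- (\<gamma> - 2) * t\<^sup>2) = exp (t\<^sup>2) * exp (t * t) * exp (- \<gamma> * t\<^sup>2)"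
    and "exp (- (\<gamma> - 1) * t\<^sup>2) = exp (t\<^sup>2) * exp (- \<gamma> * t\<^sup>2)"
    by (simp_all add: exp_add[symmetric] algebra_simps power2_eq_square)
  then show ?thesis
    unfolding K_lim_def w_gamma_def by (simp add: algebra_simps power2_eq_square)
qed

lemma integrable_K_lim_diag_w_gamma:
  assumes "\<gamma> > 2"
  shows "integrable lborel (\<lambda>t. K_lim t t * w_gamma \<gamma> t)"
proof -
  have "integrable lborel (\<lambda>t. exp (- a * t\<^sup>2) * (1 + c * t\<^sup>2))" if "a > 0" for a c :: real
    using has_bochner_integral_gaussian_even_quartic[OF that, of 1 c 0]
    by (simp add: has_bochner_integral_iff)
  from this[of "\<gamma> - 2" 1] this[of "\<gamma> - 1" 2] show ?thesis
    unfolding K_lim_diag_w_gamma using assms by simp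
qed

lemma K_lim_square_w_gamma:
  "(K_lim s t)\<^sup>2 * w_gamma \<gamma> s * w_gamma \<gamma> t = exp (- (\<gamma> - 1) * s\<^sup>2) *
     (exp (- (\<gamma> - 1) * t\<^sup>2 + 2 * s * t) * (1 + 2 * s * t + s\<^sup>2 * t\<^sup>2)
    - exp (- (\<gamma> - 1) * t\<^sup>2 + s * t) * (2 + 6 * s * t + 4 * s\<^sup>2 * t\<^sup>2)
    + exp (- (\<gamma> - 1) * t\<^sup>2) * (1 + 4 * s * t + 4 * s\<^sup>2 * t\<^sup>2))"
proof -
  have exps: "exp (- (\<gamma> - 1) * s\<^sup>2) = exp (s\<^sup>2) * exp (- \<gamma> * s\<^sup>2)"
    "exp (- (\<gamma> - 1) * t\<^sup>2 + 2 * s * t) = exp (t\<^sup>2) * exp (- \<gamma> * t\<^sup>2) * exp (s * t) * exp (s * t)"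
    "exp (- (\<gamma> - 1) * t\<^sup>2 + s * t) = exp (t\<^sup>2) * exp (- \<gamma> * t\<^sup>2) * exp (s * t)"
    "exp (- (\<gamma> - 1) * t\<^sup>2) = exp (t\<^sup>2) * exp (- \<gamma> * t\<^sup>2)"
    by (simp_all add: exp_add[symmetric] algebra_simps)
  have square: "(K_lim s t)\<^sup>2 = exp (s\<^sup>2) * exp (t\<^sup>2) * (exp (s * t) * (t * s + 1) - t * s - (1 + s * t))\<^sup>2"
    unfolding K_lim_def power_mult_distrib
    by (simp add: exp_add[symmetric] power2_eq_square[of "exp _"] add_divide_distrib)
  show ?thesis
    unfolding square exps w_gamma_def by (simp add: algebra_simps power2_eq_square)
qed

definition kernel_square_marginal :: "real \<Rightarrow> real \<Rightarrow> real" where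
  "kernel_square_marginal \<beta> s = 2 * sqrt (pi / \<beta>) *
     (exp (- (\<beta> - 1 / \<beta>) * s\<^sup>2) * (1 + 5 / (2 * \<beta>) * s\<^sup>2 + 1 / \<beta>\<^sup>2 * s ^ 4)
    - exp (- (\<beta> - 1 / (4 * \<beta>)) * s\<^sup>2) * (2 + 5 / \<beta> * s\<^sup>2 + 1 / \<beta>\<^sup>2 * s ^ 4)
    + exp (- \<beta> * s\<^sup>2) * (1 + 2 / \<beta> * s\<^sup>2))"

lemma has_bochner_integral_K_lim_square:
  assumes "\<gamma> > 1"
  shows "has_bochner_integral lborel (\<lambda>t. 2 * ((K_lim s t)\<^sup>2 * w_gamma \<gamma> s * w_gamma \<gamma> t))
           (kernel_square_marginal (\<gamma> - 1) s)"
proof -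
  define \<beta> where "\<beta> = \<gamma> - 1"
  have \<beta>: "\<beta> > 0"
    using assms by (simp add: \<beta>_def)
  have v1: "sqrt (pi / \<beta>) * exp ((2 * s)\<^sup>2 / (4 * \<beta>))
        * (1 + 2 * s * (2 * s / (2 * \<beta>)) + s\<^sup>2 * ((2 * s / (2 * \<beta>))\<^sup>2 + 1 / (2 * \<beta>)))
      = sqrt (pi / \<beta>) * exp (s\<^sup>2 / \<beta>) * (1 + 5 / (2 * \<beta>) * s\<^sup>2 + 1 / \<beta>\<^sup>2 * s ^ 4)"
    using \<beta> by (simp add: field_simps power2_eq_square power4_eq_xxxx)
  have I1: "has_bochner_integral lborel
      (\<lambda>t. exp (- \<beta> * t\<^sup>2 + 2 * s * t) * (1 + 2 * s * t + s\<^sup>2 * t\<^sup>2))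
      (sqrt (pi / \<beta>) * exp (s\<^sup>2 / \<beta>) * (1 + 5 / (2 * \<beta>) * s\<^sup>2 + 1 / \<beta>\<^sup>2 * s ^ 4))"
    using has_bochner_integral_gaussian_quadratic[OF \<beta>, of "2 * s" 1 "2 * s" "s\<^sup>2"] unfolding v1 .
  have v2: "sqrt (pi / \<beta>) * exp (s\<^sup>2 / (4 * \<beta>))
        * (2 + 6 * s * (s / (2 * \<beta>)) + 4 * s\<^sup>2 * ((s / (2 * \<beta>))\<^sup>2 + 1 / (2 * \<beta>)))
      = sqrt (pi / \<beta>) * exp (s\<^sup>2 / (4 * \<beta>)) * (2 + 5 / \<beta> * s\<^sup>2 + 1 / \<beta>\<^sup>2 * s ^ 4)"
    using \<beta> by (simp add: field_simps power2_eq_square power4_eq_xxxx)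
  have I2: "has_bochner_integral lborel
      (\<lambda>t. exp (- \<beta> * t\<^sup>2 + s * t) * (2 + 6 * s * t + 4 * s\<^sup>2 * t\<^sup>2))
      (sqrt (pi / \<beta>) * exp (s\<^sup>2 / (4 * \<beta>)) * (2 + 5 / \<beta> * s\<^sup>2 + 1 / \<beta>\<^sup>2 * s ^ 4))"
    using has_bochner_integral_gaussian_quadratic[OF \<beta>, of s 2 "6 * s" "4 * s\<^sup>2"] unfolding v2 .
  have I3: "has_bochner_integral lborel
      (\<lambda>t. exp (- \<beta> * t\<^sup>2) * (1 + 4 * s * t + 4 * s\<^sup>2 * t\<^sup>2))
      (sqrt (pi / \<beta>) * (1 + 2 / \<beta> * s\<^sup>2))"
    using has_bochner_integral_gaussian_quadratic[OF \<beta>, of 0 1 "4 * s" "4 * s\<^sup>2"] \<beta>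
    by (simp add: field_simps)
  have "has_bochner_integral lborel (\<lambda>t. 2 * ((K_lim s t)\<^sup>2 * w_gamma \<gamma> s * w_gamma \<gamma> t))
      (2 * (exp (- \<beta> * s\<^sup>2) *
      (sqrt (pi / \<beta>) * exp (s\<^sup>2 / \<beta>) * (1 + 5 / (2 * \<beta>) * s\<^sup>2 + 1 / \<beta>\<^sup>2 * s ^ 4)
     - sqrt (pi / \<beta>) * exp (s\<^sup>2 / (4 * \<beta>)) * (2 + 5 / \<beta> * s\<^sup>2 + 1 / \<beta>\<^sup>2 * s ^ 4)
     + sqrt (pi / \<beta>) * (1 + 2 / \<beta> * s\<^sup>2))))"
    unfolding K_lim_square_w_gamma \<beta>_def[symmetric]
    by (intro has_bochner_integral_mult_right has_bochner_integral_add has_bochner_integral_diff I1 I2 I3)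
  also have "\<dots> = kernel_square_marginal \<beta> s"
  proof -
    have "exp (- (\<beta> - 1 / \<beta>) * s\<^sup>2) = exp (- \<beta> * s\<^sup>2) * exp (s\<^sup>2 / \<beta>)"
      and "exp (- (\<beta> - 1 / (4 * \<beta>)) * s\<^sup>2) = exp (- \<beta> * s\<^sup>2) * exp (s\<^sup>2 / (4 * \<beta>))"
      by (simp_all add: exp_add[symmetric] algebra_simps)
    then show ?thesis
      unfolding kernel_square_marginal_def by (simp only:) (simp add: algebra_simps)
  qed
  finally show ?thesis
    unfolding \<beta>_def .
qed

lemma sqrt_pi_divide_mult:
  assumes "a > 0" and "b > 0"
  shows "sqrt (pi / a) * sqrt (pi / b) = pi / sqrt (a * b)"
proof -
  have "pi / a * (pi / b) = pi\<^sup>2 / (a * b)"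
    by (simp add: power2_eq_square)
  then show ?thesis
    by (simp add: real_sqrt_mult[symmetric] real_sqrt_divide)
qed

lemma kernel_square_marginal_rates:
  fixes \<beta> :: real
  assumes "\<beta> > 1"
  shows "\<beta> > 0" and "\<beta>\<^sup>2 - 1 > 0" and "4 * \<beta>\<^sup>2 - 1 > 0"
    and "\<beta> - 1 / \<beta> > 0" and "\<beta> - 1 / (4 * \<beta>) > 0"
    and "\<beta> - 1 / \<beta> = (\<beta>\<^sup>2 - 1) / \<beta>" and "\<beta> - 1 / (4 * \<beta>) = (4 * \<beta>\<^sup>2 - 1) / (4 * \<beta>)"
proof -
  have "\<beta>\<^sup>2 > 1"
    using assms by (simp add: one_less_power)
  then show "\<beta> > 0" and "\<beta>\<^sup>2 - 1 > 0" and "4 * \<beta>\<^sup>2 - 1 > 0"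
    using assms by linarith+
  then show "\<beta> - 1 / \<beta> > 0" and "\<beta> - 1 / (4 * \<beta>) > 0"
    by (simp_all add: field_simps power2_eq_square)
  show "\<beta> - 1 / \<beta> = (\<beta>\<^sup>2 - 1) / \<beta>" and "\<beta> - 1 / (4 * \<beta>) = (4 * \<beta>\<^sup>2 - 1) / (4 * \<beta>)"
    using assms by (simp_all add: field_simps power2_eq_square)
qed

lemma has_bochner_integral_kernel_square_marginal_sqrt:
  assumes "\<beta> > 1"
  shows "has_bochner_integral lborel (kernel_square_marginal \<beta>) (2 * sqrt (pi / \<beta>) *
     (sqrt (pi / (\<beta> - 1 / \<beta>)) * (1 + 5/4 * (1 / (\<beta>\<^sup>2 - 1)) + 3/4 * (1 / (\<beta>\<^sup>2 - 1))\<^sup>2)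
    - sqrt (pi / (\<beta> - 1 / (4 * \<beta>))) * (2 + 10 * (1 / (4 * \<beta>\<^sup>2 - 1)) + 12 * (1 / (4 * \<beta>\<^sup>2 - 1))\<^sup>2)
    + sqrt (pi / \<beta>) * (1 + 1 / \<beta>\<^sup>2)))"
proof -
  note rates = kernel_square_marginal_rates[OF assms]
  have coefficients:
    "1 + 5 / (2 * \<beta>) / (2 * (c / \<beta>)) + 3 * (1 / \<beta>\<^sup>2) / (4 * (c / \<beta>)\<^sup>2)
       = 1 + 5/4 * (1 / c) + 3/4 * (1 / c)\<^sup>2"
    "2 + 5 / \<beta> / (2 * (c / (4 * \<beta>))) + 3 * (1 / \<beta>\<^sup>2) / (4 * (c / (4 * \<beta>))\<^sup>2)
       = 2 + 10 * (1 / c) + 12 * (1 / c)\<^sup>2" if "c > 0" for c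
    using that rates(1) by (simp_all add: field_simps power2_eq_square)
  have c1: "1 + 5 / (2 * \<beta>) / (2 * (\<beta> - 1 / \<beta>)) + 3 * (1 / \<beta>\<^sup>2) / (4 * (\<beta> - 1 / \<beta>)\<^sup>2)
      = 1 + 5/4 * (1 / (\<beta>\<^sup>2 - 1)) + 3/4 * (1 / (\<beta>\<^sup>2 - 1))\<^sup>2"
    using coefficients(1)[OF rates(2)] unfolding rates(6) .
  have I1: "has_bochner_integral lborel
      (\<lambda>s. exp (- (\<beta> - 1 / \<beta>) * s\<^sup>2) * (1 + 5 / (2 * \<beta>) * s\<^sup>2 + 1 / \<beta>\<^sup>2 * s ^ 4))
      (sqrt (pi / (\<beta> - 1 / \<beta>)) * (1 + 5/4 * (1 / (\<beta>\<^sup>2 - 1)) + 3/4 * (1 / (\<beta>\<^sup>2 - 1))\<^sup>2))"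
    using has_bochner_integral_gaussian_even_quartic[OF rates(4), of 1 "5 / (2 * \<beta>)" "1 / \<beta>\<^sup>2"] unfolding c1 .
  have c2: "2 + 5 / \<beta> / (2 * (\<beta> - 1 / (4 * \<beta>))) + 3 * (1 / \<beta>\<^sup>2) / (4 * (\<beta> - 1 / (4 * \<beta>))\<^sup>2)
      = 2 + 10 * (1 / (4 * \<beta>\<^sup>2 - 1)) + 12 * (1 / (4 * \<beta>\<^sup>2 - 1))\<^sup>2"
    using coefficients(2)[OF rates(3)] unfolding rates(7) .
  have I2: "has_bochner_integral lborel
      (\<lambda>s. exp (- (\<beta> - 1 / (4 * \<beta>)) * s\<^sup>2) * (2 + 5 / \<beta> * s\<^sup>2 + 1 / \<beta>\<^sup>2 * s ^ 4))
      (sqrt (pi / (\<beta> - 1 / (4 * \<beta>))) * (2 + 10 * (1 / (4 * \<beta>\<^sup>2 - 1)) + 12 * (1 / (4 * \<beta>\<^sup>2 - 1))\<^sup>2))"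
    using has_bochner_integral_gaussian_even_quartic[OF rates(5), of 2 "5 / \<beta>" "1 / \<beta>\<^sup>2"] unfolding c2 .
  have I3: "has_bochner_integral lborel (\<lambda>s. exp (- \<beta> * s\<^sup>2) * (1 + 2 / \<beta> * s\<^sup>2))
      (sqrt (pi / \<beta>) * (1 + 1 / \<beta>\<^sup>2))"
    using has_bochner_integral_gaussian_even_quartic[OF rates(1), of 1 "2 / \<beta>" 0] rates(1)
    by (simp add: field_simps power2_eq_square)
  show ?thesis
    unfolding kernel_square_marginal_def[abs_def]
    by (intro has_bochner_integral_mult_right has_bochner_integral_add has_bochner_integral_diff I1 I2 I3)
qed

lemma has_bochner_integral_kernel_square_marginal:
  assumes "\<beta> > 1"
  shows "has_bochner_integral lborel (kernel_square_marginal \<beta>)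
    (let \<delta> = 1 / sqrt (\<beta>\<^sup>2 - 1); \<eta> = 1 / sqrt (4 * \<beta>\<^sup>2 - 1)
     in 2 * pi * (1 / \<beta> + 1 / \<beta> ^ 3 + \<delta> + \<delta> ^ 3 + (1/4) * (\<beta>\<^sup>2 + 2) * \<delta> ^ 5
                  - 4 * \<eta> - 12 * \<eta> ^ 3 - 16 * (2 * \<beta>\<^sup>2 + 1) * \<eta> ^ 5))"
proof -
  define \<delta> where "\<delta> = 1 / sqrt (\<beta>\<^sup>2 - 1)"
  define \<eta> where "\<eta> = 1 / sqrt (4 * \<beta>\<^sup>2 - 1)"
  note rates = kernel_square_marginal_rates[OF assms]
  have \<delta>: "\<delta>\<^sup>2 = 1 / (\<beta>\<^sup>2 - 1)" and \<eta>: "\<eta>\<^sup>2 = 1 / (4 * \<beta>\<^sup>2 - 1)"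
    using rates by (simp_all add: \<delta>_def \<eta>_def power_divide)
  have "sqrt (pi / \<beta>) * sqrt (pi / (\<beta> - 1 / \<beta>)) = pi * \<delta>"
    unfolding sqrt_pi_divide_mult[OF rates(1,4)] using rates(1) by (simp add: rates(6) \<delta>_def)
  moreover have "sqrt (pi / \<beta>) * sqrt (pi / (\<beta> - 1 / (4 * \<beta>))) = 2 * pi * \<eta>"
    unfolding sqrt_pi_divide_mult[OF rates(1,5)] using rates(1) by (simp add: rates(7) \<eta>_def real_sqrt_divide)
  moreover have "(sqrt (pi / \<beta>))\<^sup>2 * (1 + 1 / \<beta>\<^sup>2) = pi * (1 / \<beta> + 1 / \<beta> ^ 3)"
    using rates(1) by (simp add: field_simps power2_eq_square power3_eq_cube)
  moreover have "\<delta>\<^sup>2 * (\<beta>\<^sup>2 - 1) = 1" and "\<eta>\<^sup>2 * (4 * \<beta>\<^sup>2 - 1) = 1"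
    using rates by (simp_all add: \<delta> \<eta>)
  ultimately have closed_form: "2 * sqrt (pi / \<beta>) *
     (sqrt (pi / (\<beta> - 1 / \<beta>)) * (1 + 5/4 * \<delta>\<^sup>2 + 3/4 * (\<delta>\<^sup>2)\<^sup>2)
    - sqrt (pi / (\<beta> - 1 / (4 * \<beta>))) * (2 + 10 * \<eta>\<^sup>2 + 12 * (\<eta>\<^sup>2)\<^sup>2)
    + sqrt (pi / \<beta>) * (1 + 1 / \<beta>\<^sup>2))
    = 2 * pi * (1 / \<beta> + 1 / \<beta> ^ 3 + \<delta> + \<delta> ^ 3 + (1/4) * (\<beta>\<^sup>2 + 2) * \<delta> ^ 5
                  - 4 * \<eta> - 12 * \<eta> ^ 3 - 16 * (2 * \<beta>\<^sup>2 + 1) * \<eta> ^ 5)"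
    by algebra
  show ?thesis
    using has_bochner_integral_kernel_square_marginal_sqrt[OF assms]
    unfolding Let_def \<delta>_def[symmetric] \<eta>_def[symmetric] \<delta>[symmetric] \<eta>[symmetric] closed_form .
qed

theorem mainTheorem6:
  fixes M :: "'a measure" and W :: "'a \<Rightarrow> real \<Rightarrow> real" and \<gamma> :: real
  assumes "prob_space M"
    and "\<gamma> > 2"
    and "(\<lambda>(\<omega>, t). W \<omega> t) \<in> borel_measurable (M \<Otimes>\<^sub>M lborel)"
    and "\<forall>\<omega>\<in>space M. integrable lborel (\<lambda>t. (W \<omega> t)\<^sup>2 * w_gamma \<gamma> t)"
    and "centred_gaussian_process M K_lim W"
  shows "let T = (\<lambda>\<omega>. \<integral>t. (W \<omega> t)\<^sup>2 * w_gamma \<gamma> t \<partial>lborel);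
             \<beta> = \<gamma> - 1;
             \<delta> = 1 / sqrt (\<beta>\<^sup>2 - 1);
             \<eta> = 1 / sqrt (4 * \<beta>\<^sup>2 - 1)
         in (\<integral>\<omega>. (T \<omega> - (\<integral>\<omega>'. T \<omega>' \<partial>M))\<^sup>2 \<partial>M)
            = 2 * pi * (1 / \<beta> + 1 / \<beta> ^ 3 + \<delta> + \<delta> ^ 3 + (1/4) * (\<beta>\<^sup>2 + 2) * \<delta> ^ 5
                        - 4 * \<eta> - 12 * \<eta> ^ 3 - 16 * (2 * \<beta>\<^sup>2 + 1) * \<eta> ^ 5)"
proof -
  interpret prob_space M by fact
  define h where "h \<omega> t = (W \<omega> t)\<^sup>2 * w_gamma \<gamma> t" for \<omega> t
  have "w_gamma \<gamma> \<in> borel_measurable lborel"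
    unfolding w_gamma_def[abs_def] by measurable
  then have h_meas: "(\<lambda>(\<omega>, t). h \<omega> t) \<in> borel_measurable (M \<Otimes>\<^sub>M lborel)"
    using assms(3) unfolding h_def case_prod_beta'
    by (intro borel_measurable_times borel_measurable_power measurable_compose[OF measurable_snd])
  have mean: "has_bochner_integral M (\<lambda>\<omega>. h \<omega> t) (K_lim t t * w_gamma \<gamma> t)" for t
    using has_bochner_integral_mult_left[OF centred_gaussian_rv_second_moment[OF assms(1)
        centred_gaussian_process_point[OF assms(5)]]]
    by (simp add: h_def)
  have cov: "has_bochner_integral M (\<lambda>\<omega>. h \<omega> s * h \<omega> t) (K_lim s s * w_gamma \<gamma> s
      * (K_lim t t * w_gamma \<gamma> t) + 2 * ((K_lim s t)\<^sup>2 * w_gamma \<gamma> s * w_gamma \<gamma> t))" for s t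
    using has_bochner_integral_mult_right[OF centred_gaussian_process_square_product_moment[OF assms(1,5)
        K_lim_commute[of t s]], where c="w_gamma \<gamma> s * w_gamma \<gamma> t"]
    by (simp add: h_def algebra_simps)
  have "\<gamma> > 1" and "\<gamma> - 1 > 1"
    using assms(2) by simp_all
  show ?thesis
    unfolding Let_def h_def[symmetric]
    by (rule variance_integral_nonneg_field[OF lborel.sigma_finite_measure_axioms h_meas _ _ mean
          has_bochner_integral_integrable[OF integrable_K_lim_diag_w_gamma[OF assms(2)]] cov
          has_bochner_integral_K_lim_square[OF \<open>\<gamma> > 1\<close>]
          has_bochner_integral_kernel_square_marginal[OF \<open>\<gamma> - 1 > 1\<close>, unfolded Let_def]])
       (use assms(4) in \<open>auto simp: h_def w_gamma_def\<close>)
qed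

end
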